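(* Let $N,K\ge 1$, $\mathbf{g}\in\mathbb{C}^{N}$, $\mathbf{h}_{r,k}\in\mathbb{C}^{N}$, $h_{d,k}\in\mathbb{C}$ ($k=1,\dots,K$), with all entries of $\mathbf{g}$ and every $\mathbf{h}_{r,k}$ nonzero and every $h_{d,k}\ne0$. Let $\sigma^2,\sigma_r^2,P_r,T_{\max}>0$ and $E_k>0$. Put $\mathbf{q}_k=\mathrm{diag}(\mathbf{g}^H)\mathbf{h}_{r,k}$, $\mathbf{G}=\mathrm{diag}(|[\mathbf{g}]_1|^2,\dots,|[\mathbf{g}]_N|^2)$, $\mathbf{H}_{r,k}=\mathrm{diag}(|[\mathbf{h}_{r,k}]_1|^2,\dots,|[\mathbf{h}_{r,k}]_N|^2)$. Consider $$\max_{\tau,\{p_k\},\mathbf{v}}\ \tau\log_2\!\Big(1+\frac{\sum_{k=1}^K p_k|h_{d,k}+\mathbf{v}^H\mathbf{q}_k|^2}{\sigma^2+\sigma_r^2\mathbf{v}^H\mathbf{G}\mathbf{v}}\Big)$$ over $\tau\in\mathbb{R}$, $p_k\in\mathbb{R}$, $\mathbf{v}\in\mathbb{C}^N$, subject to $\tau p_k\le E_k$ for all $k$; $\tau\le T_{\max}$; $\tau\ge0$, $p_k\ge 0$ for all $k$; and $\sum_{k=1}^K p_k\mathbf{v}^H\mathbf{H}_{r,k}\mathbf{v}+\sigma_r^2\|\mathbf{v}\|^2\le P_r$. Then at any optimal solution, $\tau=T_{\max}$.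
   Context: This is the sum-throughput maximization for active-IRS-aided NOMA uplink: all devices transmit simultaneously for time $\tau$ with powers $p_k$ and energies $E_k$, sharing one IRS reflection/amplification vector $\mathbf{v}$; $P_r$ is the IRS amplification power budget. *)

theory Defs
  imports "HOL-Analysis.Analysis"
begin

text \<open>Vectors in C^N are represented as complex ^ 'n (N = CARD('n)); users k = 1..K are
  indexed by a finite type 'k (K = CARD('k)).\<close>

definition herm :: "complex ^ 'n \<Rightarrow> complex ^ 'n \<Rightarrow> complex" where
  "herm v w = (\<Sum>i\<in>UNIV. cnj (v $ i) * w $ i)"

definition diag_mat :: "('n \<Rightarrow> complex) \<Rightarrow> complex ^ 'n ^ 'n" where
  "diag_mat d = (\<chi> i j. if i = j then d i else 0)"

definition qvec :: "complex ^ 'n \<Rightarrow> complex ^ 'n \<Rightarrow> complex ^ 'n" where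
  "qvec g hr = diag_mat (\<lambda>i. cnj (g $ i)) *v hr"

definition sqdiag :: "complex ^ 'n \<Rightarrow> complex ^ 'n ^ 'n" where
  "sqdiag x = diag_mat (\<lambda>i. complex_of_real ((cmod (x $ i))\<^sup>2))"

definition objective ::
  "complex ^ 'n \<Rightarrow> ('k \<Rightarrow> complex ^ 'n) \<Rightarrow> ('k \<Rightarrow> complex) \<Rightarrow> real \<Rightarrow> real
    \<Rightarrow> real \<Rightarrow> ('k::finite \<Rightarrow> real) \<Rightarrow> complex ^ 'n \<Rightarrow> real" where
  "objective g hr hdir s2 sr2 \<tau> p v =
     \<tau> * log 2 (1 + (\<Sum>k\<in>UNIV. p k * (cmod (hdir k + herm v (qvec g (hr k))))\<^sup>2)
                    / (s2 + sr2 * Re (herm v (sqdiag g *v v))))"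

definition feasible ::
  "('k \<Rightarrow> complex ^ 'n) \<Rightarrow> real \<Rightarrow> real \<Rightarrow> real \<Rightarrow> ('k \<Rightarrow> real)
    \<Rightarrow> real \<Rightarrow> ('k::finite \<Rightarrow> real) \<Rightarrow> complex ^ 'n \<Rightarrow> bool" where
  "feasible hr sr2 Pr Tmax E \<tau> p v \<longleftrightarrow>
     (\<forall>k. \<tau> * p k \<le> E k) \<and> \<tau> \<le> Tmax \<and> \<tau> \<ge> 0 \<and> (\<forall>k. p k \<ge> 0) \<and>
     (\<Sum>k\<in>UNIV. p k * Re (herm v (sqdiag (hr k) *v v))) + sr2 * (norm v)\<^sup>2 \<le> Pr"

end

theory Submission
  imports Defs
begin

text \<open>If \<tau> < Tmax, stretch the transmission to Tmax and scale every power by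
  a = \<tau> / Tmax. The energies \<tau> p_k are unchanged, the amplification power can only
  drop, and the SNR becomes a times the old one. By strict concavity of the logarithm,
  Tmax log(1 + a x) > a Tmax log(1 + x) = \<tau> log(1 + x) whenever x > 0, and x > 0 at
  an optimum because the direct links alone already give a positive throughput.\<close>

definition snr ::
  "complex ^ 'n \<Rightarrow> ('k \<Rightarrow> complex ^ 'n) \<Rightarrow> ('k \<Rightarrow> complex) \<Rightarrow> real \<Rightarrow> real
    \<Rightarrow> ('k::finite \<Rightarrow> real) \<Rightarrow> complex ^ 'n \<Rightarrow> real" where
  "snr g hr hdir s2 sr2 p v =
     (\<Sum>k\<in>UNIV. p k * (cmod (hdir k + herm v (qvec g (hr k))))\<^sup>2)
       / (s2 + sr2 * Re (herm v (sqdiag g *v v)))"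

lemma objective_eq_snr:
  "objective g hr hdir s2 sr2 \<tau> p v = \<tau> * log 2 (1 + snr g hr hdir s2 sr2 p v)"
  unfolding objective_def snr_def ..

lemma herm_zero_left [simp]: "herm 0 w = 0"
  unfolding herm_def by simp

lemma sqdiag_mult_vec_nth: "(sqdiag x *v v) $ i = of_real ((cmod (x $ i))\<^sup>2) * v $ i"
  unfolding sqdiag_def diag_mat_def matrix_vector_mult_def
  by (simp add: if_distrib if_distrib_fun cong: if_cong)

lemma Re_herm_sqdiag:
  "Re (herm v (sqdiag x *v v)) = (\<Sum>i\<in>UNIV. (cmod (v $ i))\<^sup>2 * (cmod (x $ i))\<^sup>2)"
proof -
  have "cnj (v $ i) * (of_real ((cmod (x $ i))\<^sup>2) * v $ i)
      = of_real ((cmod (v $ i))\<^sup>2 * (cmod (x $ i))\<^sup>2)" for i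
    using complex_norm_square[of "v $ i"] by (simp add: algebra_simps)
  then show ?thesis
    unfolding herm_def sqdiag_mult_vec_nth Re_sum by (simp only: Re_complex_of_real)
qed

lemma Re_herm_sqdiag_nonneg: "Re (herm v (sqdiag x *v v)) \<ge> 0"
  unfolding Re_herm_sqdiag by (intro sum_nonneg) simp

lemma snr_nonneg:
  assumes "\<forall>k. p k \<ge> 0" "s2 > 0" "sr2 \<ge> 0"
  shows "snr g hr hdir s2 sr2 p v \<ge> 0"
  unfolding snr_def using assms Re_herm_sqdiag_nonneg[of v g]
  by (intro divide_nonneg_pos sum_nonneg add_pos_nonneg mult_nonneg_nonneg) auto

lemma snr_scale:
  "snr g hr hdir s2 sr2 (\<lambda>k. c * p k) v = c * snr g hr hdir s2 sr2 p v"
  unfolding snr_def by (simp add: sum_distrib_left mult.assoc)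

lemma mult_ln_less_ln_scaled:
  fixes a x :: real
  assumes "0 < a" "a < 1" "0 < x"
  shows "a * ln (1 + x) < ln (1 + a * x)"
proof -
  define u w where "u = 1 + a * x" and "w = 1 + x"
  have u: "0 < u" "u < w" using assms by (auto simp: u_def w_def add_pos_pos)
  have ln_wu: "ln (w / u) < w / u - 1"
    using ln_le_minus_one[of "w / u"] ln_eq_minus_one[of "w / u"] u by fastforce
  have ln_u: "ln (1 / u) \<le> 1 / u - 1"
    using ln_le_minus_one[of "1 / u"] u by simp
  have "a * ln w - ln u = a * ln (w / u) + (1 - a) * ln (1 / u)"
    using u by (simp add: ln_div algebra_simps)
  also have "\<dots> < a * (w / u - 1) + (1 - a) * (1 / u - 1)"
    using ln_wu ln_u assms by (intro add_less_le_mono mult_strict_left_mono mult_left_mono) auto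
  also have "\<dots> = 0"
    using u by (simp add: u_def w_def field_simps)
  finally show ?thesis by (simp add: u_def w_def)
qed

lemma mult_log_less_log_scaled:
  fixes a x b :: real
  assumes "1 < b" "0 < a" "a < 1" "0 < x"
  shows "a * log b (1 + x) < log b (1 + a * x)"
proof -
  have "a * ln (1 + x) / ln b < ln (1 + a * x) / ln b"
    using mult_ln_less_ln_scaled[OF assms(2-4)] assms(1) by (simp add: divide_strict_right_mono)
  then show ?thesis by (simp add: log_def)
qed

lemma feasible_stretch:
  assumes feas: "feasible hr sr2 Pr Tmax E \<tau> p v" and "Tmax > 0"
  shows "feasible hr sr2 Pr Tmax E Tmax (\<lambda>k. \<tau> / Tmax * p k) v"
proof -
  let ?P = "\<lambda>k. Re (herm v (sqdiag (hr k) *v v))"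
  have a: "0 \<le> \<tau> / Tmax" "\<tau> / Tmax \<le> 1" "Tmax * (\<tau> / Tmax) = \<tau>"
    using feas \<open>Tmax > 0\<close> by (auto simp: feasible_def)
  have "\<tau> / Tmax * p k * ?P k \<le> p k * ?P k" for k
    using feas a Re_herm_sqdiag_nonneg[of v "hr k"]
    by (intro mult_right_mono mult_left_le_one_le) (auto simp: feasible_def)
  then have "(\<Sum>k\<in>UNIV. \<tau> / Tmax * p k * ?P k) \<le> (\<Sum>k\<in>UNIV. p k * ?P k)"
    by (rule sum_mono)
  with feas a show ?thesis
    by (auto simp: feasible_def mult.assoc[symmetric])
qed

lemma feasible_direct_links:
  assumes "Tmax > 0" "\<forall>k. E k \<ge> 0" "Pr \<ge> 0"
  shows "feasible hr sr2 Pr Tmax E Tmax (\<lambda>k. E k / Tmax) 0"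
  using assms by (auto simp: feasible_def)

lemma objective_direct_links_pos:
  assumes "\<forall>k. hdir k \<noteq> 0" "\<forall>k. E k > 0" "Tmax > 0" "s2 > 0"
  shows "objective g hr hdir s2 sr2 Tmax (\<lambda>k. E k / Tmax) 0 > 0"
proof -
  have "(\<Sum>k\<in>UNIV. E k / Tmax * (cmod (hdir k))\<^sup>2) > 0"
    using assms by (intro sum_pos) auto
  then have "snr g hr hdir s2 sr2 (\<lambda>k. E k / Tmax) 0 > 0"
    using assms by (simp add: snr_def)
  with assms show ?thesis
    by (simp add: objective_eq_snr)
qed

lemma objective_stretch_gt:
  assumes "0 < \<tau>" "\<tau> < Tmax" "snr g hr hdir s2 sr2 p v > 0"
  shows "objective g hr hdir s2 sr2 \<tau> p v
           < objective g hr hdir s2 sr2 Tmax (\<lambda>k. \<tau> / Tmax * p k) v"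
proof -
  let ?x = "snr g hr hdir s2 sr2 p v" and ?a = "\<tau> / Tmax"
  have "objective g hr hdir s2 sr2 \<tau> p v = Tmax * (?a * log 2 (1 + ?x))"
    using assms by (simp add: objective_eq_snr)
  also have "\<dots> < Tmax * log 2 (1 + ?a * ?x)"
    using assms by (intro mult_strict_left_mono mult_log_less_log_scaled) auto
  finally show ?thesis
    unfolding objective_eq_snr snr_scale .
qed

theorem lemma2:
  fixes g :: "complex ^ 'n"
    and hr :: "'k::finite \<Rightarrow> complex ^ 'n"
    and hdir :: "'k \<Rightarrow> complex"
    and s2 sr2 Pr Tmax :: real
    and E :: "'k \<Rightarrow> real"
    and \<tau> :: real and p :: "'k \<Rightarrow> real" and v :: "complex ^ 'n"
  assumes g_nz: "\<forall>i. g $ i \<noteq> 0"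
    and hr_nz: "\<forall>k i. hr k $ i \<noteq> 0"
    and hd_nz: "\<forall>k. hdir k \<noteq> 0"
    and pos: "s2 > 0" "sr2 > 0" "Pr > 0" "Tmax > 0"
    and E_pos: "\<forall>k. E k > 0"
    and feas: "feasible hr sr2 Pr Tmax E \<tau> p v"
    and opt: "\<forall>\<tau>' p' v'. feasible hr sr2 Pr Tmax E \<tau>' p' v' \<longrightarrow>
                 objective g hr hdir s2 sr2 \<tau>' p' v' \<le> objective g hr hdir s2 sr2 \<tau> p v"
  shows "\<tau> = Tmax"
proof (rule ccontr)
  let ?x = "snr g hr hdir s2 sr2 p v"
  assume "\<tau> \<noteq> Tmax"
  with feas have lt: "\<tau> < Tmax" by (simp add: feasible_def)
  have "0 < objective g hr hdir s2 sr2 Tmax (\<lambda>k. E k / Tmax) 0"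
    using hd_nz E_pos pos by (simp add: objective_direct_links_pos)
  also have "\<dots> \<le> objective g hr hdir s2 sr2 \<tau> p v"
    using opt feasible_direct_links[of Tmax E Pr hr sr2] pos E_pos by (simp add: less_imp_le)
  finally have obj_pos: "0 < \<tau> * log 2 (1 + ?x)"
    by (simp add: objective_eq_snr)
  have "0 \<le> \<tau>" using feas by (simp add: feasible_def)
  moreover have x_nonneg: "0 \<le> ?x"
    using feas pos by (intro snr_nonneg) (auto simp: feasible_def)
  ultimately have "0 < \<tau>" "0 < log 2 (1 + ?x)"
    using obj_pos by (auto simp: zero_less_mult_iff)
  then have "objective g hr hdir s2 sr2 \<tau> p v
               < objective g hr hdir s2 sr2 Tmax (\<lambda>k. \<tau> / Tmax * p k) v"
    using lt x_nonneg by (intro objective_stretch_gt) auto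
  moreover have "objective g hr hdir s2 sr2 Tmax (\<lambda>k. \<tau> / Tmax * p k) v
                   \<le> objective g hr hdir s2 sr2 \<tau> p v"
    using opt feasible_stretch[OF feas pos(4)] by blast
  ultimately show False by simp
qed

end
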